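(* Let $\Pi$ be the topological prismatoid \#1039 of Criado and Santos: a polyhedral $4$-sphere on the $14$ vertices $0,1,2,3,4,5,6,a,b,c,d,e,f,g$ whose simplicial facets are exactly the following $4$-simplices (each string lists the five vertices of a facet): 0145f, 014ad, 014ae, 014bc, 014bf, 014cd, 04bcd, 05bde, 05cde, 0123d, 0126d, 0134e, 013ad, 013ae, 0156g, 015bf, 015bg, 016cd, 016cg, 01bcg, 0234e, 023cd, 023ce, 0245f, 024ae, 024af, 0256g, 025ae, 025af, 025be, 025bg, 026be, 026bg, 026cd, 026ce, 03acd, 03ace, 04abd, 04abf, 05abd, 05abf, 05acd, 05ace, 06bce, 06bcg, 0bcde, 1234e, 123ae, 123af, 123bf, 123bg, 123cd, 123cg, 1245f, 124ae, 124af, 1256g, 125bf, 125bg, 126cd, 126cg, 13abf, 13abg, 13acd, 13acg, 14abf, 14abg, 14acd, 14acg, 14bcg, 23ace, 23acf, 23bcf, 23bcg, 25abe, 25abf, 26abe, 26abf, 26ace, 26acf, 26bcf, 26bcg, 3abfg, 3acfg, 3bcfg, 4abcd, 4abcg, 5abde, 5acde, 6abef, 6acef, 6bcef, and which in addition has exactly two non-simplicial facets, its two bases, with vertex sets $\{0,1,\dots,6\}$ and $\{a,b,\dots,g\}$. Then $\Pi$ is not realizable: there is no convex $5$-polytope whose boundary complex is combinatorially isomorphic to $\Pi$.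
   Context: A topological prismatoid (Criado–Santos) is a combinatorial abstraction of a geometric prismatoid, i.e. of a polytope all of whose vertices lie in two parallel facets (the bases); all other facets are here simplices. *)

theory Defs
  imports "HOL-Analysis.Analysis"
begin

definition prismatoid_vertices :: "char set" where
  "prismatoid_vertices = set ''0123456abcdefg''"

definition prismatoid_simplicial_facets :: "char set set" where
  "prismatoid_simplicial_facets = set (map set [
     ''0145f'', ''014ad'', ''014ae'', ''014bc'', ''014bf'', ''014cd'', ''04bcd'', ''05bde'',
     ''05cde'', ''0123d'', ''0126d'', ''0134e'', ''013ad'', ''013ae'', ''0156g'', ''015bf'',
     ''015bg'', ''016cd'', ''016cg'', ''01bcg'', ''0234e'', ''023cd'', ''023ce'', ''0245f'',
     ''024ae'', ''024af'', ''0256g'', ''025ae'', ''025af'', ''025be'', ''025bg'', ''026be'',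
     ''026bg'', ''026cd'', ''026ce'', ''03acd'', ''03ace'', ''04abd'', ''04abf'', ''05abd'',
     ''05abf'', ''05acd'', ''05ace'', ''06bce'', ''06bcg'', ''0bcde'', ''1234e'', ''123ae'',
     ''123af'', ''123bf'', ''123bg'', ''123cd'', ''123cg'', ''1245f'', ''124ae'', ''124af'',
     ''1256g'', ''125bf'', ''125bg'', ''126cd'', ''126cg'', ''13abf'', ''13abg'', ''13acd'',
     ''13acg'', ''14abf'', ''14abg'', ''14acd'', ''14acg'', ''14bcg'', ''23ace'', ''23acf'',
     ''23bcf'', ''23bcg'', ''25abe'', ''25abf'', ''26abe'', ''26abf'', ''26ace'', ''26acf'',
     ''26bcf'', ''26bcg'', ''3abfg'', ''3acfg'', ''3bcfg'', ''4abcd'', ''4abcg'', ''5abde'',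
     ''5acde'', ''6abef'', ''6acef'', ''6bcef''])"

definition prismatoid_bases :: "char set set" where
  "prismatoid_bases = {set ''0123456'', set ''abcdefg''}"

definition prismatoid_facets :: "char set set" where
  "prismatoid_facets = prismatoid_simplicial_facets \<union> prismatoid_bases"

definition poly_vertices :: "'a::euclidean_space set \<Rightarrow> 'a set" where
  "poly_vertices P = {v. v extreme_point_of P}"

text \<open>A convex polytope P realizes the prismatoid if there is a bijection between the
vertices of the prismatoid and the vertices of P mapping the facets of the prismatoid
exactly onto the vertex sets of the facets of P (this determines a combinatorial
isomorphism of the boundary complex of P with the prismatoid).\<close>

definition realizes_prismatoid :: "'a::euclidean_space set \<Rightarrow> bool" where
  "realizes_prismatoid P \<longleftrightarrow>
     (\<exists>\<phi>. bij_betw \<phi> prismatoid_vertices (poly_vertices P) \<and>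
          (\<lambda>S. \<phi> ` S) ` prismatoid_facets = poly_vertices ` {F. F facet_of P})"

end

(*
  If a polytope P has a facet F with supporting affine functional g (zero on F, negative on
  the other vertices), then for every affine dependence c among vertices v_i the relation
  \<Sum> c_i g(v_i) = 0 shows that c, restricted to the vertices off F, is either zero or
  takes both signs.  Seven vertices of a 5-polytope are affinely dependent.  Applied to
  facets of the prismatoid, the sign rule forces a dependence l on {0,1,2,3,4,5,a} to have
  l_3, l_5 of one strict sign and l_4 of the other, and a dependence m on {0,1,2,3,4,a,e}
  to have m_3, m_4 of the same strict sign.  The dependence m_3 l - l_3 m vanishes at 3, so
  the facets 024ae and 025ae force its values at 5 and at 4 to have the same sign, whereas
  the signs of l and m make them opposite.
*)

theory Submission
  imports Defs
begin

definition affine_dependence :: "('i \<Rightarrow> 'a::real_vector) \<Rightarrow> 'i set \<Rightarrow> ('i \<Rightarrow> real) \<Rightarrow> bool" where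
  "affine_dependence p I c \<longleftrightarrow> sum c I = 0 \<and> (\<Sum>i\<in>I. c i *\<^sub>R p i) = 0"

lemma affine_dependence_uminus:
  "affine_dependence p I (\<lambda>i. - c i) \<longleftrightarrow> affine_dependence p I c"
  by (simp add: affine_dependence_def sum_negf)

lemma affine_dependence_diff_scaled:
  assumes "affine_dependence p I c" and "affine_dependence p I d"
  shows "affine_dependence p I (\<lambda>i. a * c i - b * d i)"
proof -
  have "(\<Sum>i\<in>I. a * c i - b * d i) = a * sum c I - b * sum d I"
    by (simp add: sum_subtractf sum_distrib_left)
  moreover have "(\<Sum>i\<in>I. (a * c i - b * d i) *\<^sub>R p i)
      = a *\<^sub>R (\<Sum>i\<in>I. c i *\<^sub>R p i) - b *\<^sub>R (\<Sum>i\<in>I. d i *\<^sub>R p i)"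
    by (simp add: scaleR_diff_left sum_subtractf scaleR_sum_right)
  ultimately show ?thesis
    using assms by (simp add: affine_dependence_def)
qed

lemma nontrivial_affine_dependence_exists:
  fixes p :: "'i \<Rightarrow> 'a::euclidean_space"
  assumes "finite J" and "I \<subseteq> J" and "inj_on p I" and "p ` I \<subseteq> S"
    and "aff_dim S + 1 < int (card I)"
  obtains c where "affine_dependence p J c" "\<And>j. j \<in> J - I \<Longrightarrow> c j = 0" "\<exists>i\<in>I. c i \<noteq> 0"
proof -
  have fin: "finite I" using assms(1,2) finite_subset by blast
  have "affine_dependent (p ` I)"
  proof (rule ccontr)
    assume "\<not> affine_dependent (p ` I)"
    then have "int (card I) = aff_dim (p ` I) + 1"
      using aff_dim_affine_independent card_image[OF assms(3)] by fastforce
    moreover have "aff_dim (p ` I) \<le> aff_dim S" using aff_dim_subset[OF assms(4)] .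
    ultimately show False using assms(5) by simp
  qed
  then obtain U where U: "sum U (p ` I) = 0" "\<exists>v\<in>p ` I. U v \<noteq> 0" "(\<Sum>v\<in>p ` I. U v *\<^sub>R v) = 0"
    using affine_dependent_explicit_finite[of "p ` I"] fin by auto
  define c where "c j = (if j \<in> I then U (p j) else 0)" for j
  have "sum c J = (\<Sum>i\<in>I. U (p i))" "(\<Sum>j\<in>J. c j *\<^sub>R p j) = (\<Sum>i\<in>I. U (p i) *\<^sub>R p i)"
    using assms(1,2) by (auto intro!: sum.mono_neutral_cong_right simp: c_def)
  moreover have "sum U (p ` I) = (\<Sum>i\<in>I. U (p i))" "(\<Sum>v\<in>p ` I. U v *\<^sub>R v) = (\<Sum>i\<in>I. U (p i) *\<^sub>R p i)"
    using sum.reindex[OF assms(3)] by auto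
  ultimately have "affine_dependence p J c"
    using U by (simp add: affine_dependence_def)
  moreover have "\<exists>i\<in>I. c i \<noteq> 0" using U(2) by (auto simp: c_def)
  ultimately show ?thesis using that by (simp add: c_def)
qed

lemma affine_dependence_nonneg_off_exposed_face:
  assumes F: "F exposed_face_of P" and I: "finite I" "p ` I \<subseteq> P"
    and c: "affine_dependence p I c"
    and nonneg: "\<And>j. j \<in> I \<Longrightarrow> p j \<notin> F \<Longrightarrow> 0 \<le> c j"
    and i: "i \<in> I" "p i \<notin> F"
  shows "c i = 0"
proof -
  obtain a b where P: "P \<subseteq> {x. a \<bullet> x \<le> b}" and F_eq: "F = P \<inter> {x. a \<bullet> x = b}"
    using F by (auto simp: exposed_face_of_def)
  define g where "g j = b - a \<bullet> p j" for j
  have g_pos: "g j > 0" if "j \<in> I" "p j \<notin> F" for j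
    using that I(2) P F_eq by (force simp: g_def)
  have g_zero: "g j = 0" if "j \<in> I" "p j \<in> F" for j
    using that F_eq by (simp add: g_def)
  have "(\<Sum>j\<in>I. c j * g j) = b * sum c I - a \<bullet> (\<Sum>j\<in>I. c j *\<^sub>R p j)"
    by (simp add: g_def algebra_simps sum_subtractf sum_distrib_left inner_sum_right)
  also have "\<dots> = 0" using c by (simp add: affine_dependence_def)
  finally have sum_zero: "(\<Sum>j\<in>I. c j * g j) = 0" .
  have terms_nonneg: "0 \<le> c j * g j" if "j \<in> I" for j
  proof (cases "p j \<in> F")
    case False
    then show ?thesis using that g_pos nonneg by (simp add: less_imp_le)
  qed (simp add: that g_zero)
  have "c i * g i = 0" using sum_nonneg_0[OF I(1) terms_nonneg sum_zero i(1)] .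
  then show ?thesis using g_pos[OF i] by simp
qed

lemma affine_dependence_sgn_off_exposed_face:
  assumes F: "F exposed_face_of P" and I: "finite I" "p ` I \<subseteq> P"
    and c: "affine_dependence p I c"
    and x: "x \<in> I" "p x \<notin> F" and y: "y \<in> I" "p y \<notin> F"
    and others: "\<And>j. j \<in> I \<Longrightarrow> p j \<notin> F \<Longrightarrow> j \<noteq> x \<Longrightarrow> j \<noteq> y \<Longrightarrow> c j = 0"
  shows "sgn (c x) = - sgn (c y)"
  \<comment> \<open>for \<open>x = y\<close>: \<open>c x = 0\<close> whenever \<open>c\<close> vanishes at all other points off \<open>F\<close>\<close>
proof -
  have vanish: "d x = 0 \<and> d y = 0"
    if d: "affine_dependence p I d" "0 \<le> d x" "0 \<le> d y"
      and d_others: "\<And>j. j \<in> I \<Longrightarrow> p j \<notin> F \<Longrightarrow> j \<noteq> x \<Longrightarrow> j \<noteq> y \<Longrightarrow> d j = 0" for d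
  proof -
    have "0 \<le> d j" if "j \<in> I" "p j \<notin> F" for j
      using that d(2,3) d_others[OF that] by (cases "j = x \<or> j = y") auto
    then show ?thesis
      using affine_dependence_nonneg_off_exposed_face[OF F I d(1)] x y by blast
  qed
  have "c x = 0 \<and> c y = 0" if "0 \<le> c x" "0 \<le> c y"
    using vanish[OF c that others] .
  moreover have "c x = 0 \<and> c y = 0" if "c x \<le> 0" "c y \<le> 0"
    using vanish[of "\<lambda>i. - c i"] c that others by (simp add: affine_dependence_uminus)
  ultimately have "(0 < c x \<and> c y < 0) \<or> (c x < 0 \<and> 0 < c y) \<or> (c x = 0 \<and> c y = 0)"
    by (smt (verit))
  then show ?thesis by auto
qed

lemma sgn_diff_eq_if_opposite:
  fixes u v :: real
  assumes "sgn v = - sgn u"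
  shows "sgn (u - v) = sgn u"
  using assms by (auto simp: sgn_if split: if_splits)

definition realizes_complex ::
    "'a::euclidean_space set \<Rightarrow> ('v \<Rightarrow> 'a) \<Rightarrow> 'v set \<Rightarrow> 'v set set \<Rightarrow> bool" where
  "realizes_complex P \<phi> V Fs \<longleftrightarrow>
     bij_betw \<phi> V (poly_vertices P) \<and> (\<lambda>S. \<phi> ` S) ` Fs = poly_vertices ` {F. F facet_of P}"

lemma realizes_prismatoid_iff:
  "realizes_prismatoid P \<longleftrightarrow> (\<exists>\<phi>. realizes_complex P \<phi> prismatoid_vertices prismatoid_facets)"
  by (simp add: realizes_prismatoid_def realizes_complex_def)

lemma realizes_complex_inj_on: "realizes_complex P \<phi> V Fs \<Longrightarrow> inj_on \<phi> V"
  by (simp add: realizes_complex_def bij_betw_def)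

lemma realizes_complex_image_subset: "realizes_complex P \<phi> V Fs \<Longrightarrow> \<phi> ` V \<subseteq> P"
  by (auto simp: realizes_complex_def bij_betw_def poly_vertices_def extreme_point_of_def)

lemma realizes_complex_facet:
  assumes \<phi>: "realizes_complex P \<phi> V Fs" and S: "S \<in> Fs" "S \<subseteq> V"
  obtains F where "F facet_of P" "\<And>i. i \<in> V \<Longrightarrow> \<phi> i \<in> F \<longleftrightarrow> i \<in> S"
proof -
  have bij: "bij_betw \<phi> V (poly_vertices P)" using \<phi> by (simp add: realizes_complex_def)
  obtain F where F: "F facet_of P" and FS: "poly_vertices F = \<phi> ` S"
    using \<phi> S(1) unfolding realizes_complex_def by (metis (no_types, lifting) imageE imageI mem_Collect_eq)
  have F_iff: "\<phi> i \<in> F \<longleftrightarrow> i \<in> S" if i: "i \<in> V" for i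
  proof
    assume "\<phi> i \<in> F"
    moreover have "\<phi> i extreme_point_of P"
      using bij i by (auto simp: bij_betw_def poly_vertices_def)
    ultimately have "\<phi> i \<in> \<phi> ` S"
      using FS extreme_point_of_face[OF facet_of_imp_face_of[OF F]] by (auto simp: poly_vertices_def)
    then show "i \<in> S"
      using bij i S(2) by (auto simp: bij_betw_def inj_on_def)
  next
    assume "i \<in> S"
    then show "\<phi> i \<in> F"
      using FS by (auto simp: poly_vertices_def extreme_point_of_def)
  qed
  show ?thesis using that[OF F F_iff] .
qed

lemma realizes_complex_sgn_off_facet:
  assumes P: "polytope P" and \<phi>: "realizes_complex P \<phi> V Fs" and S: "S \<in> Fs" "S \<subseteq> V"
    and J: "finite J" "J \<subseteq> V" and c: "affine_dependence \<phi> J c"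
    and x: "x \<in> J - S" and y: "y \<in> J - S"
    and others: "\<forall>j\<in>J - S. j \<noteq> x \<longrightarrow> j \<noteq> y \<longrightarrow> c j = 0"
  shows "sgn (c x) = - sgn (c y)"
proof -
  obtain F where F: "F facet_of P" and F_iff: "\<And>i. i \<in> V \<Longrightarrow> \<phi> i \<in> F \<longleftrightarrow> i \<in> S"
    using realizes_complex_facet[OF \<phi> S] by blast
  have exposed: "F exposed_face_of P"
    using F P by (simp add: exposed_face_of_polyhedron polytope_imp_polyhedron facet_of_imp_face_of)
  have image: "\<phi> ` J \<subseteq> P"
    using realizes_complex_image_subset[OF \<phi>] J(2) by blast
  show ?thesis
  proof (rule affine_dependence_sgn_off_exposed_face[OF exposed J(1) image c])
    show "x \<in> J" "y \<in> J" using x y by auto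
    show "\<phi> x \<notin> F" "\<phi> y \<notin> F" using x y J(2) F_iff by auto
    show "c j = 0" if "j \<in> J" "\<phi> j \<notin> F" "j \<noteq> x" "j \<noteq> y" for j
      using that others F_iff J(2) by auto
  qed
qed

lemmas prismatoid_defs =
  prismatoid_vertices_def prismatoid_facets_def prismatoid_simplicial_facets_def prismatoid_bases_def

lemma prismatoid_facets_subset_vertices: "S \<in> prismatoid_facets \<Longrightarrow> S \<subseteq> prismatoid_vertices"
  by (auto simp: prismatoid_defs)

lemma prismatoid_sgn_off_facet:
  assumes "polytope P" and "realizes_complex P \<phi> prismatoid_vertices prismatoid_facets"
    and "J \<subseteq> prismatoid_vertices" and "affine_dependence \<phi> J c" and "S \<in> prismatoid_facets"
    and "x \<in> J - S" and "y \<in> J - S" and "\<forall>j\<in>J - S. j \<noteq> x \<longrightarrow> j \<noteq> y \<longrightarrow> c j = 0"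
  shows "sgn (c x) = - sgn (c y)"
proof (rule realizes_complex_sgn_off_facet[OF assms(1,2,5) _ _ assms(3,4,6-8)])
  show "S \<subseteq> prismatoid_vertices" using prismatoid_facets_subset_vertices[OF assms(5)] .
  show "finite J" using assms(3) finite_subset by (auto simp: prismatoid_vertices_def)
qed

lemma prismatoid_affine_dependences:
  assumes \<phi>: "realizes_complex P \<phi> prismatoid_vertices prismatoid_facets" and dim: "aff_dim P = 5"
  obtains l m where "affine_dependence \<phi> (set ''012345ae'') l" "l (CHR ''e'') = 0"
      "\<exists>i\<in>set ''012345a''. l i \<noteq> 0"
    and "affine_dependence \<phi> (set ''012345ae'') m" "m (CHR ''5'') = 0"
      "\<exists>i\<in>set ''01234ae''. m i \<noteq> 0"
proof -
  let ?J = "set ''012345ae''"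
  have seven_points: "I \<subseteq> ?J" "inj_on \<phi> I" "\<phi> ` I \<subseteq> P" "aff_dim P + 1 < int (card I)"
    if "I \<in> {set ''012345a'', set ''01234ae''}" for I
    using that realizes_complex_inj_on[OF \<phi>] realizes_complex_image_subset[OF \<phi>] dim
    by (auto simp: prismatoid_vertices_def elim!: inj_on_subset)
  obtain l where l: "affine_dependence \<phi> ?J l" "\<And>j. j \<in> ?J - set ''012345a'' \<Longrightarrow> l j = 0"
    "\<exists>i\<in>set ''012345a''. l i \<noteq> 0"
    using nontrivial_affine_dependence_exists[OF finite_set seven_points, of "set ''012345a''"] by blast
  obtain m where m: "affine_dependence \<phi> ?J m" "\<And>j. j \<in> ?J - set ''01234ae'' \<Longrightarrow> m j = 0"
    "\<exists>i\<in>set ''01234ae''. m i \<noteq> 0"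
    using nontrivial_affine_dependence_exists[OF finite_set seven_points, of "set ''01234ae''"] by blast
  have "l (CHR ''e'') = 0" and "m (CHR ''5'') = 0" using l(2) m(2) by simp_all
  with l m that show ?thesis by blast
qed

lemma prismatoid_first_dependence_signs:
  assumes P: "polytope P" and \<phi>: "realizes_complex P \<phi> prismatoid_vertices prismatoid_facets"
    and c: "affine_dependence \<phi> (set ''012345ae'') c" and c_e: "c (CHR ''e'') = 0"
    and nontrivial: "\<exists>i\<in>set ''012345a''. c i \<noteq> 0"
  shows "c (CHR ''5'') \<noteq> 0" "sgn (c (CHR ''3'')) = sgn (c (CHR ''5''))"
    "sgn (c (CHR ''4'')) = - sgn (c (CHR ''5''))"
proof -
  note sgn_off = prismatoid_sgn_off_facet[OF P \<phi> _ c]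
  have "sgn (c (CHR ''a'')) = - sgn (c (CHR ''a''))"
    by (rule sgn_off[of "set ''0123456''"]) (use c_e in \<open>auto simp: prismatoid_defs\<close>)
  then have c_a: "c (CHR ''a'') = 0" by (simp add: sgn_zero_iff)
  have s45: "sgn (c (CHR ''4'')) = - sgn (c (CHR ''5''))"
    by (rule sgn_off[of "set ''0123d''"]) (use c_a c_e in \<open>auto simp: prismatoid_defs\<close>)
  have s25: "sgn (c (CHR ''2'')) = - sgn (c (CHR ''5''))"
    by (rule sgn_off[of "set ''0134e''"]) (use c_a in \<open>auto simp: prismatoid_defs\<close>)
  have s23: "sgn (c (CHR ''2'')) = - sgn (c (CHR ''3''))"
    by (rule sgn_off[of "set ''0145f''"]) (use c_a c_e in \<open>auto simp: prismatoid_defs\<close>)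
  have s15: "sgn (c (CHR ''1'')) = - sgn (c (CHR ''5''))"
    by (rule sgn_off[of "set ''0234e''"]) (use c_a in \<open>auto simp: prismatoid_defs\<close>)
  have s05: "sgn (c (CHR ''0'')) = - sgn (c (CHR ''5''))"
    by (rule sgn_off[of "set ''1234e''"]) (use c_a in \<open>auto simp: prismatoid_defs\<close>)
  show c_5: "c (CHR ''5'') \<noteq> 0"
  proof
    assume "c (CHR ''5'') = 0"
    with s45 s25 s23 s15 s05 have "c i = 0" if "i \<in> set ''012345ae''" for i
      using that c_a c_e by (auto simp: sgn_zero_iff)
    with nontrivial show False by auto
  qed
  show "sgn (c (CHR ''3'')) = sgn (c (CHR ''5''))" using s23 s25 by simp
  show "sgn (c (CHR ''4'')) = - sgn (c (CHR ''5''))" by (fact s45)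
qed

lemma prismatoid_second_dependence_signs:
  assumes P: "polytope P" and \<phi>: "realizes_complex P \<phi> prismatoid_vertices prismatoid_facets"
    and c: "affine_dependence \<phi> (set ''012345ae'') c" and c_5: "c (CHR ''5'') = 0"
    and nontrivial: "\<exists>i\<in>set ''01234ae''. c i \<noteq> 0"
  shows "c (CHR ''3'') \<noteq> 0" "sgn (c (CHR ''4'')) = sgn (c (CHR ''3''))"
proof -
  note sgn_off = prismatoid_sgn_off_facet[OF P \<phi> _ c]
  have s23: "sgn (c (CHR ''2'')) = - sgn (c (CHR ''3''))"
    by (rule sgn_off[of "set ''014ae''"]) (use c_5 in \<open>auto simp: prismatoid_defs\<close>)
  have s24: "sgn (c (CHR ''2'')) = - sgn (c (CHR ''4''))"
    by (rule sgn_off[of "set ''013ae''"]) (use c_5 in \<open>auto simp: prismatoid_defs\<close>)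
  have s04: "sgn (c (CHR ''0'')) = - sgn (c (CHR ''4''))"
    by (rule sgn_off[of "set ''123ae''"]) (use c_5 in \<open>auto simp: prismatoid_defs\<close>)
  have s13: "sgn (c (CHR ''1'')) = - sgn (c (CHR ''3''))"
    by (rule sgn_off[of "set ''024ae''"]) (use c_5 in \<open>auto simp: prismatoid_defs\<close>)
  have s1a: "sgn (c (CHR ''1'')) = - sgn (c (CHR ''a''))"
    by (rule sgn_off[of "set ''0234e''"]) (use c_5 in \<open>auto simp: prismatoid_defs\<close>)
  show "c (CHR ''3'') \<noteq> 0"
  proof
    assume "c (CHR ''3'') = 0"
    with s23 s24 s04 s13 s1a c_5 have zero: "c i = 0" if "i \<in> set ''012345a''" for i
      using that by (auto simp: sgn_zero_iff)
    moreover have "c (CHR ''e'') = 0"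
      using c zero by (simp add: affine_dependence_def)
    ultimately show False using nontrivial by auto
  qed
  show "sgn (c (CHR ''4'')) = sgn (c (CHR ''3''))" using s23 s24 by simp
qed

theorem mainTheorem3:
  fixes P :: "'a::euclidean_space set"
  assumes "polytope P" and "aff_dim P = 5"
  shows "\<not> realizes_prismatoid P"
proof
  assume "realizes_prismatoid P"
  then obtain \<phi> where \<phi>: "realizes_complex P \<phi> prismatoid_vertices prismatoid_facets"
    by (auto simp: realizes_prismatoid_iff)
  obtain l m where l: "affine_dependence \<phi> (set ''012345ae'') l" "l (CHR ''e'') = 0"
      "\<exists>i\<in>set ''012345a''. l i \<noteq> 0"
    and m: "affine_dependence \<phi> (set ''012345ae'') m" "m (CHR ''5'') = 0"
      "\<exists>i\<in>set ''01234ae''. m i \<noteq> 0"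
    using prismatoid_affine_dependences[OF \<phi> assms(2)] .
  note l_signs = prismatoid_first_dependence_signs[OF assms(1) \<phi> l]
  note m_signs = prismatoid_second_dependence_signs[OF assms(1) \<phi> m]
  define d where "d i = m (CHR ''3'') * l i - l (CHR ''3'') * m i" for i
  have d: "affine_dependence \<phi> (set ''012345ae'') d"
    unfolding d_def using l(1) m(1) by (rule affine_dependence_diff_scaled)
  have "sgn (d (CHR ''1'')) = - sgn (d (CHR ''5''))"
    by (rule prismatoid_sgn_off_facet[OF assms(1) \<phi> _ d, of "set ''024ae''"])
      (auto simp: prismatoid_defs d_def)
  moreover have "sgn (d (CHR ''1'')) = - sgn (d (CHR ''4''))"
    by (rule prismatoid_sgn_off_facet[OF assms(1) \<phi> _ d, of "set ''025ae''"])
      (auto simp: prismatoid_defs d_def)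
  moreover have "sgn (d (CHR ''4'')) = - sgn (d (CHR ''5''))"
    unfolding d_def using l_signs m_signs m(2)
    by (simp add: sgn_diff_eq_if_opposite sgn_mult)
  ultimately show False
    using l_signs(1) m_signs(1) by (simp add: d_def m(2) sgn_zero_iff)
qed

end
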